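(* Let $(Y,d)$ be a locally compact Hadamard space, $\Lambda$ a group acting properly and co-compactly by isometries on $Y$, and $y\in Y$ a reference point. Then for any conjugate finite lists $(a_i)_{1\le i\le N}$, $(b_i)_{1\le i\le N}$ in $\Lambda$ there exists $g\in\Lambda$ with $b_i=g^{-1}a_ig$ for all $i$ such that $$d_y(g,e)\leqslant C_\star\sum_{i=1}^N\big(d_y(a_i,e)+d_y(b_i,e)\big)+C,$$ where $d_y(g,h)=d(g\cdot y,h\cdot y)$ and the constants $C_\star,C$ depend only on the conjugacy class of the list $(a_i)$ (and on $y$).
   Context: A Hadamard space is a complete metric space $(Y,d)$ such that any two points are joined by a curve whose length equals their distance (a geodesic), and for any points $P,Q,R$ and $0\le\lambda\le1$, the point $Q_\lambda$ on the geodesic from $Q$ to $R$ with $d(Q_\lambda,Q)=\lambda d(Q,R)$ satisfies $d(P,Q_\lambda)^2\le(1-\lambda)d(P,Q)^2+\lambda d(P,R)^2-\lambda(1-\lambda)d(Q,R)^2$. Proper action: each $y$ has $r>0$ with $\{g: gB(y,r)\cap B(y,r)\ne\varnothing\}$ finite; co-compact: $Y/\Lambda$ compact. Lists are conjugate if some $g\in\Lambda$ satisfies $b_i=g^{-1}a_ig$ for all $i$. *)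

theory Defs
  imports "HOL-Analysis.Analysis" "HOL-Algebra.Group"
begin

definition geodesic_path :: "(real \<Rightarrow> 'a::metric_space) \<Rightarrow> 'a \<Rightarrow> 'a \<Rightarrow> bool" where
  "geodesic_path \<gamma> x y \<longleftrightarrow> \<gamma> 0 = x \<and> \<gamma> (dist x y) = y \<and>
     (\<forall>s\<in>{0..dist x y}. \<forall>t\<in>{0..dist x y}. dist (\<gamma> s) (\<gamma> t) = \<bar>s - t\<bar>)"

definition hadamard_space :: "'a::metric_space itself \<Rightarrow> bool" where
  "hadamard_space _ \<longleftrightarrow>
     complete (UNIV :: 'a set) \<and>
     (\<forall>x y :: 'a. \<exists>\<gamma>. geodesic_path \<gamma> x y) \<and>
     (\<forall>(P::'a) Q R \<gamma> (t::real). geodesic_path \<gamma> Q R \<and> 0 \<le> t \<and> t \<le> 1 \<longrightarrow>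
        (dist P (\<gamma> (t * dist Q R)))\<^sup>2
          \<le> (1 - t) * (dist P Q)\<^sup>2 + t * (dist P R)\<^sup>2 - t * (1 - t) * (dist Q R)\<^sup>2)"

definition isometric_action :: "('g, 'b) monoid_scheme \<Rightarrow> ('g \<Rightarrow> 'a::metric_space \<Rightarrow> 'a) \<Rightarrow> bool" where
  "isometric_action G \<phi> \<longleftrightarrow>
     \<phi> \<one>\<^bsub>G\<^esub> = id \<and>
     (\<forall>g\<in>carrier G. \<forall>h\<in>carrier G. \<phi> (g \<otimes>\<^bsub>G\<^esub> h) = \<phi> g \<circ> \<phi> h) \<and>
     (\<forall>g\<in>carrier G. \<forall>x y. dist (\<phi> g x) (\<phi> g y) = dist x y)"

definition proper_action :: "('g, 'b) monoid_scheme \<Rightarrow> ('g \<Rightarrow> 'a::metric_space \<Rightarrow> 'a) \<Rightarrow> bool" where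
  "proper_action G \<phi> \<longleftrightarrow>
     (\<forall>y. \<exists>r>0. finite {g \<in> carrier G. \<phi> g ` ball y r \<inter> ball y r \<noteq> {}})"

text \<open>Y/\<Lambda> compact: every cover of Y by \<Lambda>-invariant open sets (= preimages of
  open sets of the quotient) has a finite subcover.\<close>
definition cocompact_action :: "('g, 'b) monoid_scheme \<Rightarrow> ('g \<Rightarrow> 'a::topological_space \<Rightarrow> 'a) \<Rightarrow> bool" where
  "cocompact_action G \<phi> \<longleftrightarrow>
     (\<forall>\<U>. (\<forall>U\<in>\<U>. open U \<and> (\<forall>g\<in>carrier G. \<phi> g ` U \<subseteq> U)) \<and> \<Union>\<U> = UNIV \<longrightarrow>
        (\<exists>\<V>\<subseteq>\<U>. finite \<V> \<and> \<Union>\<V> = UNIV))"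

definition conj_by :: "('g, 'b) monoid_scheme \<Rightarrow> 'g \<Rightarrow> 'g list \<Rightarrow> 'g list \<Rightarrow> bool" where
  "conj_by G g a b \<longleftrightarrow> length a = length b \<and>
     (\<forall>i<length a. b ! i = inv\<^bsub>G\<^esub> g \<otimes>\<^bsub>G\<^esub> a ! i \<otimes>\<^bsub>G\<^esub> g)"

definition conj_lists :: "('g, 'b) monoid_scheme \<Rightarrow> 'g list \<Rightarrow> 'g list \<Rightarrow> bool" where
  "conj_lists G a b \<longleftrightarrow> set a \<subseteq> carrier G \<and> set b \<subseteq> carrier G \<and>
     (\<exists>g\<in>carrier G. conj_by G g a b)"

definition orbit_dist :: "('g \<Rightarrow> 'a::metric_space \<Rightarrow> 'a) \<Rightarrow> 'a \<Rightarrow> 'g \<Rightarrow> 'g \<Rightarrow> real" where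
  "orbit_dist \<phi> y g h = dist (\<phi> g y) (\<phi> h y)"

end

theory Submission
  imports Defs
begin

text \<open>
  Fix the list a0 and its displacement function
  F(x) = \<Sum>i d(a0_i x, x).  If a = h\<inverse> a0 h and b = k\<inverse> a0 k, then the quantity
  \<Sum>i d_y(a_i,e) + d_y(b_i,e) equals F(hy) + F(ky), and for all z1, z2 in the
  centraliser Z of a0 the element g = h\<inverse> z1 z2\<inverse> k conjugates a to b, with
  d(gy, y) \<le> d(hy, z1 y) + d(ky, z2 y).  So the theorem follows once every orbit
  point hy is shown to lie within A F(hy) + B of the orbit Z y
  (lemma near_centraliser_orbit).  This coarse retraction is obtained from:
  (1) a proper co-compact action has finite orbit balls (chain argument along
      geodesics), hence each sublevel set of F is covered by Z-translates of one
      compact set;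
  (2) compactness yields a uniform gap: F exceeds the level R by some \<delta> > 0 at
      distance 1/2 from the sublevel set {F \<le> R};
  (3) F is convex along geodesics (Hadamard space), which turns this gap into
      linear growth of F with the distance to {F \<le> R}.
\<close>

section \<open>Geodesics in Hadamard spaces\<close>

lemma geodesic_path_dist:
  assumes "geodesic_path \<gamma> x y" "s \<in> {0..dist x y}" "t \<in> {0..dist x y}"
  shows "dist (\<gamma> s) (\<gamma> t) = \<bar>s - t\<bar>"
  using assms unfolding geodesic_path_def by blast

lemma geodesic_path_endpoints:
  assumes "geodesic_path \<gamma> x y"
  shows "\<gamma> 0 = x" "\<gamma> (dist x y) = y"
  using assms unfolding geodesic_path_def by auto

lemma geodesic_path_reverse:
  assumes "geodesic_path \<gamma> x y"
  shows "geodesic_path (\<lambda>s. \<gamma> (dist x y - s)) y x"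
proof -
  have "dist (\<gamma> (dist x y - s)) (\<gamma> (dist x y - t)) = \<bar>s - t\<bar>"
    if "s \<in> {0..dist x y}" "t \<in> {0..dist x y}" for s t
    using geodesic_path_dist[OF assms, of "dist x y - s" "dist x y - t"] that by auto
  then show ?thesis
    using geodesic_path_endpoints[OF assms] unfolding geodesic_path_def by (simp add: dist_commute)
qed

lemma geodesic_path_isometry:
  assumes "geodesic_path \<gamma> x y" and "\<And>u v. dist (f u) (f v) = dist u v"
  shows "geodesic_path (f \<circ> \<gamma>) (f x) (f y)"
  using assms unfolding geodesic_path_def by auto

lemma geodesic_subdivision_step:
  assumes \<gamma>: "geodesic_path \<gamma> x y" and k: "k < N"
  shows "dist (\<gamma> (real k * dist x y / N)) (\<gamma> (real (Suc k) * dist x y / N)) = dist x y / N"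
proof -
  have mem: "real j * dist x y / N \<in> {0..dist x y}" if "j \<le> N" for j
  proof -
    have "real j * dist x y \<le> real N * dist x y" using that by (intro mult_right_mono) auto
    then show ?thesis using k by (auto simp: divide_le_eq mult.commute)
  qed
  have "dist (\<gamma> (real k * dist x y / N)) (\<gamma> (real (Suc k) * dist x y / N))
      = \<bar>real k * dist x y / N - real (Suc k) * dist x y / N\<bar>"
    using k by (intro geodesic_path_dist[OF \<gamma>] mem) auto
  also have "\<dots> = dist x y / N" by (simp add: diff_divide_distrib[symmetric] algebra_simps)
  finally show ?thesis .
qed

lemma hadamard_geodesic:
  "hadamard_space TYPE('a::metric_space) \<Longrightarrow> \<exists>\<gamma>. geodesic_path \<gamma> x (y::'a)"
  unfolding hadamard_space_def by blast

lemma hadamard_CN: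
  assumes "hadamard_space TYPE('a::metric_space)" "geodesic_path \<gamma> (Q::'a) R" "0 \<le> t" "t \<le> 1"
  shows "(dist P (\<gamma> (t * dist Q R)))\<^sup>2
          \<le> (1 - t) * (dist P Q)\<^sup>2 + t * (dist P R)\<^sup>2 - t * (1 - t) * (dist Q R)\<^sup>2"
  using assms unfolding hadamard_space_def by blast

text \<open>Comparison for two geodesics issuing from a common point: the CN inequality,
  applied once at each end, gives d(A_t, B_t) \<le> t d(A, B).\<close>
lemma hadamard_common_start:
  assumes H: "hadamard_space TYPE('a::metric_space)"
    and g: "geodesic_path \<gamma> (X0::'a) A" and s: "geodesic_path \<sigma> X0 B" and t: "0 \<le> t" "t \<le> 1"
  shows "dist (\<gamma> (t * dist X0 A)) (\<sigma> (t * dist X0 B)) \<le> t * dist A B"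
proof -
  define At where "At = \<gamma> (t * dist X0 A)"
  define Bt where "Bt = \<sigma> (t * dist X0 B)"
  have dAt: "dist At X0 = t * dist X0 A"
  proof -
    have "dist At X0 = dist (\<gamma> (t * dist X0 A)) (\<gamma> 0)"
      using geodesic_path_endpoints[OF g] At_def by simp
    also have "\<dots> = \<bar>t * dist X0 A - 0\<bar>"
      by (rule geodesic_path_dist[OF g]) (use t in \<open>auto intro: mult_left_le_one_le\<close>)
    finally show ?thesis using t by simp
  qed
  have c1: "(dist At Bt)\<^sup>2 \<le> (1 - t) * (dist At X0)\<^sup>2 + t * (dist At B)\<^sup>2 - t * (1 - t) * (dist X0 B)\<^sup>2"
    unfolding Bt_def by (rule hadamard_CN[OF H s t])
  have c2: "(dist B At)\<^sup>2 \<le> (1 - t) * (dist B X0)\<^sup>2 + t * (dist B A)\<^sup>2 - t * (1 - t) * (dist X0 A)\<^sup>2"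
    unfolding At_def by (rule hadamard_CN[OF H g t])
  have "t * (dist At B)\<^sup>2 \<le> t * ((1 - t) * (dist B X0)\<^sup>2 + t * (dist B A)\<^sup>2 - t * (1 - t) * (dist X0 A)\<^sup>2)"
    using c2 t by (simp add: dist_commute mult_left_mono)
  then have "(dist At Bt)\<^sup>2 \<le> (t * dist A B)\<^sup>2"
    using c1 dAt by (simp add: dist_commute power2_eq_square algebra_simps)
  then have "dist At Bt \<le> t * dist A B"
    by (rule power2_le_imp_le) (use t in auto)
  then show ?thesis unfolding At_def Bt_def .
qed

lemma hadamard_geodesics_convex:
  assumes H: "hadamard_space TYPE('a::metric_space)"
    and g: "geodesic_path \<gamma> (A::'a) B" and d: "geodesic_path \<delta> A' B'" and t: "0 \<le> t" "t \<le> 1"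
  shows "dist (\<gamma> (t * dist A B)) (\<delta> (t * dist A' B')) \<le> (1 - t) * dist A A' + t * dist B B'"
proof -
  obtain \<sigma> where s: "geodesic_path \<sigma> A B'" using hadamard_geodesic[OF H] by blast
  have 1: "dist (\<gamma> (t * dist A B)) (\<sigma> (t * dist A B')) \<le> t * dist B B'"
    by (rule hadamard_common_start[OF H g s t])
  have "dist ((\<lambda>s. \<sigma> (dist A B' - s)) ((1 - t) * dist B' A))
             ((\<lambda>s. \<delta> (dist A' B' - s)) ((1 - t) * dist B' A')) \<le> (1 - t) * dist A A'"
    by (rule hadamard_common_start[OF H geodesic_path_reverse[OF s] geodesic_path_reverse[OF d]])
      (use t in auto)
  moreover have "dist A B' - (1 - t) * dist B' A = t * dist A B'"
    "dist A' B' - (1 - t) * dist B' A' = t * dist A' B'"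
    by (simp_all add: dist_commute algebra_simps)
  ultimately have 2: "dist (\<sigma> (t * dist A B')) (\<delta> (t * dist A' B')) \<le> (1 - t) * dist A A'"
    by simp
  show ?thesis
    using 1 2 dist_triangle[of "\<gamma> (t * dist A B)" "\<delta> (t * dist A' B')" "\<sigma> (t * dist A B')"]
    by linarith
qed

lemma convex_gap_linear_growth:
  fixes f :: "'a::metric_space \<Rightarrow> real"
  assumes geodesic: "\<And>x y :: 'a. \<exists>\<gamma>. geodesic_path \<gamma> x y"
    and convex: "\<And>\<gamma> q p t. geodesic_path \<gamma> q p \<Longrightarrow> 0 \<le> t \<Longrightarrow> t \<le> 1 \<Longrightarrow>
                    f (\<gamma> (t * dist q p)) \<le> (1 - t) * f q + t * f p"
    and nonneg: "\<And>x. 0 \<le> f x" and c0: "f c0 \<le> R" and \<delta>: "0 < \<delta>"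
    and gap: "\<And>u. (\<And>c. f c \<le> R \<Longrightarrow> 1/2 \<le> dist u c) \<Longrightarrow> R + \<delta> \<le> f u"
  shows "\<exists>q. f q \<le> R \<and> dist p q \<le> 1 + f p / \<delta>"
proof -
  define C where "C = {c. f c \<le> R}"
  have "C \<noteq> {}" using c0 unfolding C_def by blast
  then have "(INF c\<in>C. dist p c) < infdist p C + 1/2" by (simp add: infdist_notempty)
  then obtain q where q: "q \<in> C" "dist p q < infdist p C + 1/2"
    using \<open>C \<noteq> {}\<close> by (subst (asm) cINF_less_iff) (auto intro: bdd_belowI2[where m=0])
  have slope: "0 \<le> f p / \<delta>" using nonneg \<delta> by simp
  show ?thesis
  proof (cases "dist p q \<le> 1")
    case True
    then show ?thesis using q(1) slope unfolding C_def by (intro exI[of _ q]) auto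
  next
    case False
    define L where "L = dist q p"
    have L: "1 < L" using False unfolding L_def by (simp add: dist_commute)
    obtain \<gamma> where \<gamma>: "geodesic_path \<gamma> q p" using geodesic[of q p] by blast
    (* The point u at distance 1 from q towards p is far from C ... *)
    define u where "u = \<gamma> 1"
    have "dist u p = \<bar>1 - L\<bar>"
      using geodesic_path_dist[OF \<gamma>, of 1 "dist q p"] geodesic_path_endpoints[OF \<gamma>] L
      unfolding u_def L_def by simp
    then have dup: "dist u p = L - 1" using L by simp
    have "1/2 \<le> dist u c" if "f c \<le> R" for c
    proof -
      have "infdist p C \<le> dist p c" using that unfolding C_def by (intro infdist_le) simp
      then show ?thesis
        using q(2) dup dist_triangle[of p c u] unfolding L_def by (simp add: dist_commute)
    qed
    then have Fu: "R + \<delta> \<le> f u" by (rule gap)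
    (* ... while convexity bounds f u by the value at p, scaled by 1/L. *)
    have t: "0 \<le> 1 / L" "1 / L \<le> 1" using L by auto
    have scale: "1 / L * dist q p = 1" using L unfolding L_def by (cases "q = p") auto
    have "f u \<le> (1 - 1 / L) * f q + 1 / L * f p"
      using convex[OF \<gamma> t] unfolding u_def scale .
    also have "\<dots> \<le> (1 - 1 / L) * R + 1 / L * f p"
      using q(1) t unfolding C_def by (simp add: mult_left_mono)
    finally have "\<delta> \<le> 1 / L * (f p - R)" using Fu by (simp add: algebra_simps)
    also have "\<dots> \<le> 1 / L * f p"
      using t nonneg[of c0] c0 by (intro mult_left_mono) auto
    finally have "L \<le> f p / \<delta>" using L \<delta> by (simp add: field_simps)
    then show ?thesis using q(1) unfolding C_def L_def by (intro exI[of _ q]) (simp add: dist_commute)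
  qed
qed

section \<open>Group-theoretic preliminaries\<close>

definition conj_list :: "('g, 'b) monoid_scheme \<Rightarrow> 'g \<Rightarrow> 'g list \<Rightarrow> 'g list" where
  "conj_list G g l = map (\<lambda>c. inv\<^bsub>G\<^esub> g \<otimes>\<^bsub>G\<^esub> c \<otimes>\<^bsub>G\<^esub> g) l"

definition list_centraliser :: "('g, 'b) monoid_scheme \<Rightarrow> 'g list \<Rightarrow> 'g set" where
  "list_centraliser G l = {z \<in> carrier G. conj_list G z l = l}"

fun words :: "('g, 'b) monoid_scheme \<Rightarrow> 'g set \<Rightarrow> nat \<Rightarrow> 'g set" where
  "words G T 0 = {\<one>\<^bsub>G\<^esub>}"
| "words G T (Suc n) = (\<lambda>(w, s). w \<otimes>\<^bsub>G\<^esub> s) ` (words G T n \<times> T)"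

context group
begin

lemma conj_by_iff_conj_list: "conj_by G g a b \<longleftrightarrow> b = conj_list G g a"
  unfolding conj_by_def conj_list_def by (auto simp: list_eq_iff_nth_eq)

lemma conj_list_mult:
  assumes "set l \<subseteq> carrier G" "g \<in> carrier G" "h \<in> carrier G"
  shows "conj_list G g (conj_list G h l) = conj_list G (h \<otimes> g) l"
  using assms unfolding conj_list_def by (auto simp: inv_mult_group m_assoc)

lemma conj_list_carrier:
  "set l \<subseteq> carrier G \<Longrightarrow> g \<in> carrier G \<Longrightarrow> set (conj_list G g l) \<subseteq> carrier G"
  unfolding conj_list_def by auto

lemma conj_list_one: "set l \<subseteq> carrier G \<Longrightarrow> conj_list G \<one> l = l"
  unfolding conj_list_def by (induction l) auto

lemma list_centraliser_inv:
  assumes l: "set l \<subseteq> carrier G" and z: "z \<in> list_centraliser G l"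
  shows "inv z \<in> list_centraliser G l"
proof -
  have zc: "z \<in> carrier G" and fix_l: "conj_list G z l = l"
    using z unfolding list_centraliser_def by auto
  have "conj_list G (inv z) l = conj_list G (inv z) (conj_list G z l)" using fix_l by simp
  also have "\<dots> = l" using l zc by (simp add: conj_list_mult conj_list_one)
  finally show ?thesis using zc unfolding list_centraliser_def by simp
qed

lemma conj_list_centraliser_factor:
  assumes "set l \<subseteq> carrier G" "z \<in> list_centraliser G l" "g \<in> carrier G"
  shows "conj_list G (z \<otimes> g) l = conj_list G g l"
  using assms conj_list_mult[of l g z] unfolding list_centraliser_def by simp

lemma conj_list_eq_centraliser:
  assumes l: "set l \<subseteq> carrier G" and g: "g \<in> carrier G" "g' \<in> carrier G"
    and eq: "conj_list G g l = conj_list G g' l"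
  shows "g \<otimes> inv g' \<in> list_centraliser G l"
proof -
  have "conj_list G (g \<otimes> inv g') l = conj_list G (inv g') (conj_list G g' l)"
    using l g by (simp add: conj_list_mult eq[symmetric])
  also have "\<dots> = l" using l g by (simp add: conj_list_mult conj_list_one)
  finally show ?thesis using g unfolding list_centraliser_def by simp
qed

lemma words_finite: "finite T \<Longrightarrow> finite (words G T n)"
  by (induction n) auto

lemma words_carrier: "T \<subseteq> carrier G \<Longrightarrow> words G T n \<subseteq> carrier G"
  by (induction n) auto

lemma chain_in_words:
  assumes T: "T \<subseteq> carrier G" and H: "\<And>k. H k \<in> carrier G"
    and steps: "\<And>k. k < N \<Longrightarrow> inv (H k) \<otimes> H (Suc k) \<in> T" and "n \<le> N"
  shows "\<exists>w\<in>words G T n. H n = H 0 \<otimes> w"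
  using \<open>n \<le> N\<close>
proof (induction n)
  case 0
  then show ?case using H by simp
next
  case (Suc n)
  then obtain w where w: "w \<in> words G T n" "H n = H 0 \<otimes> w" by auto
  have wc: "w \<in> carrier G" using w words_carrier[OF T] by auto
  define s where "s = inv (H n) \<otimes> H (Suc n)"
  have sT: "s \<in> T" using steps Suc.prems unfolding s_def by simp
  have "H (Suc n) = H n \<otimes> s" unfolding s_def using H by (simp add: m_assoc[symmetric])
  also have "\<dots> = H 0 \<otimes> (w \<otimes> s)" using w(2) H wc sT T by (auto simp: m_assoc)
  finally show ?case using w(1) sT by force
qed

end

section \<open>Isometric group actions\<close>

locale group_isometric_action = group G for G :: "('g, 'b) monoid_scheme" (structure) +
  fixes \<phi> :: "'g \<Rightarrow> 'a::metric_space \<Rightarrow> 'a"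
  assumes isometric: "isometric_action G \<phi>"
begin

lemma phi_one[simp]: "\<phi> \<one> x = x"
  using isometric unfolding isometric_action_def by simp

lemma phi_mult: "g \<in> carrier G \<Longrightarrow> h \<in> carrier G \<Longrightarrow> \<phi> (g \<otimes> h) x = \<phi> g (\<phi> h x)"
  using isometric unfolding isometric_action_def by simp

lemma phi_dist[simp]: "g \<in> carrier G \<Longrightarrow> dist (\<phi> g x) (\<phi> g x') = dist x x'"
  using isometric unfolding isometric_action_def by simp

lemma phi_inv_left[simp]: "g \<in> carrier G \<Longrightarrow> \<phi> (inv g) (\<phi> g x) = x"
  by (metis inv_closed l_inv phi_mult phi_one)

lemma phi_inv_right[simp]: "g \<in> carrier G \<Longrightarrow> \<phi> g (\<phi> (inv g) x) = x"
  by (metis inv_closed r_inv phi_mult phi_one)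

lemma dist_phi_swap: "g \<in> carrier G \<Longrightarrow> dist (\<phi> g x) x' = dist x (\<phi> (inv g) x')"
  by (metis phi_dist phi_inv_left inv_closed)

lemma phi_continuous: "g \<in> carrier G \<Longrightarrow> continuous_on S (\<phi> g)"
  unfolding continuous_on_iff by (metis phi_dist)

lemma phi_open_image: "g \<in> carrier G \<Longrightarrow> open U \<Longrightarrow> open (\<phi> g ` U)"
proof -
  assume g: "g \<in> carrier G" and U: "open U"
  have "\<phi> g ` U = \<phi> (inv g) -` U"
    using g by (auto, metis image_eqI phi_inv_right)
  then show ?thesis
    using U phi_continuous[of "inv g" UNIV] g by (simp add: open_vimage)
qed

text \<open>Co-compactness in covering form: for any choice of open neighbourhoods W x,
  finitely many of them have translates covering the whole space.  (Apply the
  definition to the invariant open sets given by the orbits of the W x.)\<close>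
lemma cocompact_finite_cover:
  assumes cc: "cocompact_action G \<phi>" and W: "\<And>x. open (W x)" "\<And>x. x \<in> W x"
  shows "\<exists>X. finite X \<and> (\<forall>p. \<exists>x\<in>X. \<exists>g\<in>carrier G. p \<in> \<phi> g ` W x)"
proof -
  define sat where "sat U = (\<Union>g\<in>carrier G. \<phi> g ` U)" for U
  let ?U = "range (\<lambda>x. sat (W x))"
  have "open (sat (W x))" for x unfolding sat_def by (intro open_UN ballI phi_open_image W)
  moreover have "\<phi> g ` sat U \<subseteq> sat U" if "g \<in> carrier G" for g U
    using that unfolding sat_def by (auto simp: phi_mult[symmetric] intro!: bexI[where x="g \<otimes> _"])
  ultimately have invariant: "\<forall>U\<in>?U. open U \<and> (\<forall>g\<in>carrier G. \<phi> g ` U \<subseteq> U)"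
    by blast
  have "p \<in> sat (W p)" for p
    unfolding sat_def using W(2)[of p] by (auto intro!: bexI[where x=\<one>])
  then have cover: "\<Union>?U = UNIV" by blast
  obtain V where V: "V \<subseteq> ?U" "finite V" "\<Union>V = UNIV"
    using cc invariant cover unfolding cocompact_action_def by meson
  then obtain X where X: "finite X" "V = (\<lambda>x. sat (W x)) ` X"
    by (meson finite_subset_image)
  have "\<exists>x\<in>X. \<exists>g\<in>carrier G. p \<in> \<phi> g ` W x" for p
  proof -
    have "p \<in> \<Union>V" using V(3) by simp
    then show ?thesis using X(2) unfolding sat_def by auto
  qed
  then show ?thesis using X(1) by blast
qed

lemma compact_fundamental_set:
  assumes lc: "locally_compact_space (euclidean :: 'a topology)" and cc: "cocompact_action G \<phi>"
  shows "\<exists>K. compact K \<and> (\<forall>p. \<exists>g\<in>carrier G. \<exists>k\<in>K. p = \<phi> g k)"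
proof -
  have "\<forall>x::'a. \<exists>U K. open U \<and> compact K \<and> x \<in> U \<and> U \<subseteq> K"
    using lc unfolding locally_compact_space_def by auto
  then obtain U where "\<forall>x::'a. \<exists>K. open (U x) \<and> compact K \<and> x \<in> U x \<and> U x \<subseteq> K"
    by (rule choice[THEN exE]) blast
  then obtain K where "\<forall>x. open (U x) \<and> compact (K x) \<and> x \<in> U x \<and> U x \<subseteq> K x"
    by (rule choice[THEN exE]) blast
  then have UK: "\<And>x. open (U x)" "\<And>x. compact (K x)" "\<And>x. x \<in> U x" "\<And>x. U x \<subseteq> K x"
    by auto
  obtain X where X: "finite X" "\<And>p. \<exists>x\<in>X. \<exists>g\<in>carrier G. p \<in> \<phi> g ` U x"
    using cocompact_finite_cover[OF cc, of U] UK by auto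
  have "compact (\<Union>x\<in>X. K x)" using X(1) UK(2) by (intro compact_UN) auto
  moreover have "\<exists>g\<in>carrier G. \<exists>k\<in>(\<Union>x\<in>X. K x). p = \<phi> g k" for p
    using X(2)[of p] UK(4) by blast
  ultimately show ?thesis by blast
qed

lemma finite_transporters:
  assumes fin: "finite {g \<in> carrier G. \<phi> g ` ball x r \<inter> ball x r \<noteq> {}}" and c: "c \<le> r"
  shows "finite {s \<in> carrier G. dist (\<phi> s x') x < c}" (is "finite ?S")
    and "finite {s \<in> carrier G. dist (\<phi> s x) x' < c}"
proof -
  show fin_S: "finite ?S"
  proof (cases "?S = {}")
    case False
    then obtain s0 where s0: "s0 \<in> carrier G" "dist (\<phi> s0 x') x < c" by auto
    have "?S \<subseteq> (\<lambda>t. t \<otimes> s0) ` {g \<in> carrier G. \<phi> g ` ball x r \<inter> ball x r \<noteq> {}}"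
    proof
      fix s assume s: "s \<in> ?S"
      then have sc: "s \<in> carrier G" by auto
      have "\<phi> (s \<otimes> inv s0) (\<phi> s0 x') = \<phi> s x'" using sc s0 by (simp add: phi_mult)
      moreover have "\<phi> s0 x' \<in> ball x r" "\<phi> s x' \<in> ball x r"
        using s s0 c by (auto simp: dist_commute)
      ultimately have "\<phi> s x' \<in> \<phi> (s \<otimes> inv s0) ` ball x r \<inter> ball x r" by (metis IntI image_eqI)
      then have "s \<otimes> inv s0 \<in> {g \<in> carrier G. \<phi> g ` ball x r \<inter> ball x r \<noteq> {}}"
        using sc s0 by auto
      moreover have "s = (s \<otimes> inv s0) \<otimes> s0" using sc s0 by (simp add: m_assoc)
      ultimately show "s \<in> (\<lambda>t. t \<otimes> s0) ` {g \<in> carrier G. \<phi> g ` ball x r \<inter> ball x r \<noteq> {}}"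
        by blast
    qed
    then show ?thesis using fin finite_subset by blast
  qed (metis finite.emptyI)
  have "{s \<in> carrier G. dist (\<phi> s x) x' < c} \<subseteq> (\<lambda>t. inv t) ` ?S"
  proof
    fix s assume s: "s \<in> {s \<in> carrier G. dist (\<phi> s x) x' < c}"
    then have sc: "s \<in> carrier G" and "dist (\<phi> s x) x' < c" by auto
    then have "inv s \<in> ?S" using dist_phi_swap[of s x x'] by (simp add: dist_commute)
    then show "s \<in> (\<lambda>t. inv t) ` ?S" using inv_inv[OF sc] by (metis image_eqI)
  qed
  then show "finite {s \<in> carrier G. dist (\<phi> s x) x' < c}" using fin_S finite_subset by blast
qed

text \<open>The combinatorial core of the Svarc-Milnor argument: a finite set T and a
  "marking" relation M h p (read: h brings p near a base point) such that every
  point has a marker, markers are equivariant, and markers of points at distance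
  at most \<epsilon> differ by an element of T.\<close>
lemma uniform_step_set:
  assumes pr: "proper_action G \<phi>" and cc: "cocompact_action G \<phi>"
  obtains \<epsilon> T M where "0 < \<epsilon>" "finite T" "T \<subseteq> carrier G"
    "\<And>h p. M h p \<Longrightarrow> h \<in> carrier G"
    "\<And>p. \<exists>h. M h p"
    "\<And>g h p. g \<in> carrier G \<Longrightarrow> M h p \<Longrightarrow> M (g \<otimes> h) (\<phi> g p)"
    "\<And>h h' p q. M h p \<Longrightarrow> M h' q \<Longrightarrow> dist p q \<le> \<epsilon> \<Longrightarrow> inv h \<otimes> h' \<in> T"
proof -
  have "\<forall>x. \<exists>r. 0 < r \<and> finite {g \<in> carrier G. \<phi> g ` ball x r \<inter> ball x r \<noteq> {}}"
    using pr unfolding proper_action_def by blast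
  then obtain \<rho> where "\<forall>x. 0 < \<rho> x \<and> finite {g \<in> carrier G. \<phi> g ` ball x (\<rho> x) \<inter> ball x (\<rho> x) \<noteq> {}}"
    by (rule choice[THEN exE]) blast
  then have \<rho>: "\<And>x. 0 < \<rho> x" "\<And>x. finite {g \<in> carrier G. \<phi> g ` ball x (\<rho> x) \<inter> ball x (\<rho> x) \<noteq> {}}"
    by auto
  obtain X where X: "finite X" "\<And>p. \<exists>x\<in>X. \<exists>g\<in>carrier G. p \<in> \<phi> g ` ball x (\<rho> x / 4)"
    using cocompact_finite_cover[OF cc, of "\<lambda>x. ball x (\<rho> x / 4)"] \<rho>(1) by auto
  have "X \<noteq> {}" using X(2) by blast
  define \<epsilon> where "\<epsilon> = Min (\<rho> ` X) / 4"
  have \<epsilon>: "0 < \<epsilon>" "\<And>x. x \<in> X \<Longrightarrow> \<epsilon> \<le> \<rho> x / 4"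
    unfolding \<epsilon>_def using X(1) \<open>X \<noteq> {}\<close> \<rho>(1) by auto
  define M where "M h p \<longleftrightarrow> h \<in> carrier G \<and> (\<exists>x\<in>X. dist x (\<phi> (inv h) p) < \<rho> x / 4)" for h p
  define T where "T = {s \<in> carrier G. \<exists>x\<in>X. \<exists>x'\<in>X. dist (\<phi> s x') x < \<rho> x / 4 + \<rho> x' / 4 + \<epsilon>}"
  have "finite {s \<in> carrier G. dist (\<phi> s x') x < \<rho> x / 4 + \<rho> x' / 4 + \<epsilon>}"
    if "x \<in> X" "x' \<in> X" for x x'
  proof (cases "\<rho> x' \<le> \<rho> x")
    case True
    show ?thesis
      by (rule finite_transporters(1)[OF \<rho>(2)]) (use True \<epsilon>(2)[OF that(1)] \<rho>(1)[of x] in linarith)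
  next
    case False
    show ?thesis
      by (rule finite_transporters(2)[OF \<rho>(2)]) (use False \<epsilon>(2)[OF that(1)] \<rho>(1)[of x'] in linarith)
  qed
  moreover have "T \<subseteq> (\<Union>x\<in>X. \<Union>x'\<in>X. {s \<in> carrier G. dist (\<phi> s x') x < \<rho> x / 4 + \<rho> x' / 4 + \<epsilon>})"
    unfolding T_def by blast
  ultimately have T_finite: "finite T" using X(1) by (meson finite_UN_I finite_subset)
  have T_carrier: "T \<subseteq> carrier G" unfolding T_def by auto
  have M_carrier: "h \<in> carrier G" if "M h p" for h p using that unfolding M_def by simp
  have M_exists: "\<exists>h. M h p" for p
  proof -
    obtain x g where "x \<in> X" "g \<in> carrier G" "p \<in> \<phi> g ` ball x (\<rho> x / 4)" using X(2) by blast
    then have "M g p" unfolding M_def by auto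
    then show ?thesis by blast
  qed
  have M_equivariant: "M (g \<otimes> h) (\<phi> g p)" if "g \<in> carrier G" "M h p" for g h p
    using that unfolding M_def by (simp add: inv_mult_group phi_mult)
  have M_step: "inv h \<otimes> h' \<in> T" if marks: "M h p" "M h' q" and near: "dist p q \<le> \<epsilon>" for h h' p q
  proof -
    obtain x x' where x: "x \<in> X" "dist x (\<phi> (inv h) p) < \<rho> x / 4" "h \<in> carrier G"
      and x': "x' \<in> X" "dist x' (\<phi> (inv h') q) < \<rho> x' / 4" "h' \<in> carrier G"
      using marks unfolding M_def by blast
    define s where "s = inv h \<otimes> h'"
    have sc: "s \<in> carrier G" using x x' s_def by simp
    have "\<phi> s (\<phi> (inv h') q) = \<phi> (inv h) q" using x x' unfolding s_def by (simp add: phi_mult)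
    then have "dist (\<phi> s x') (\<phi> (inv h) q) < \<rho> x' / 4" using x'(2) sc by (metis phi_dist)
    moreover have "dist (\<phi> (inv h) q) (\<phi> (inv h) p) \<le> \<epsilon>" using near x(3) by (simp add: dist_commute)
    ultimately have "dist (\<phi> s x') x < \<rho> x / 4 + \<rho> x' / 4 + \<epsilon>"
      using x(2) dist_commute[of x "\<phi> (inv h) p"] dist_triangle[of "\<phi> s x'" x "\<phi> (inv h) q"]
        dist_triangle[of "\<phi> (inv h) q" x "\<phi> (inv h) p"] by linarith
    then show ?thesis using sc x x' unfolding T_def s_def by blast
  qed
  show ?thesis by (rule that[OF \<epsilon>(1) T_finite T_carrier M_carrier M_exists M_equivariant M_step])
qed

text \<open>Proper co-compact actions on geodesic spaces have finite orbit balls: an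
  element g with d(gy, y) \<le> R is, up to conjugation by a fixed marker of y, a
  word of length about R / \<epsilon> in the finite set T, read off along a geodesic from
  y to gy.\<close>
lemma orbit_ball_finite:
  assumes geodesic: "\<And>x y :: 'a. \<exists>\<gamma>. geodesic_path \<gamma> x y"
    and pr: "proper_action G \<phi>" and cc: "cocompact_action G \<phi>"
  shows "finite {g \<in> carrier G. dist (\<phi> g y) y \<le> R}"
proof -
  obtain \<epsilon> T M where \<epsilon>: "0 < \<epsilon>" and T: "finite T" "T \<subseteq> carrier G"
    and M: "\<And>h p. M h p \<Longrightarrow> h \<in> carrier G" "\<And>p. \<exists>h. M h p"
      "\<And>g h p. g \<in> carrier G \<Longrightarrow> M h p \<Longrightarrow> M (g \<otimes> h) (\<phi> g p)"
      "\<And>h h' p q. M h p \<Longrightarrow> M h' q \<Longrightarrow> dist p q \<le> \<epsilon> \<Longrightarrow> inv h \<otimes> h' \<in> T"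
    by (rule uniform_step_set[OF pr cc]) blast
  obtain mark where mark: "\<And>p. M (mark p) p" using M(2) by metis
  define h0 where "h0 = mark y"
  have h0: "h0 \<in> carrier G" "M h0 y" using mark M(1) unfolding h0_def by auto
  define N where "N = nat \<lceil>R / \<epsilon>\<rceil> + 1"
  have "0 < N" unfolding N_def by simp
  have "R / \<epsilon> \<le> real N" using real_nat_ceiling_ge[of "R / \<epsilon>"] unfolding N_def by linarith
  then have R_le: "R \<le> \<epsilon> * N" using \<epsilon> by (simp add: field_simps)
  have "g \<in> (\<lambda>w. h0 \<otimes> w \<otimes> inv h0) ` words G T N" if g: "g \<in> carrier G" "dist y (\<phi> g y) \<le> R" for g
  proof -
    obtain \<gamma> where \<gamma>: "geodesic_path \<gamma> y (\<phi> g y)" using geodesic by blast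
    define p where "p k = \<gamma> (real k * dist y (\<phi> g y) / N)" for k
    have p_ends: "p 0 = y" "p N = \<phi> g y"
      using geodesic_path_endpoints[OF \<gamma>] \<open>0 < N\<close> unfolding p_def by auto
    have "dist y (\<phi> g y) / N \<le> \<epsilon>" using g(2) R_le \<open>0 < N\<close> by (simp add: field_simps)
    then have step: "dist (p k) (p (Suc k)) \<le> \<epsilon>" if "k < N" for k
      using geodesic_subdivision_step[OF \<gamma> that] unfolding p_def by simp
    define mk where "mk k = (if k = 0 then h0 else if k = N then g \<otimes> h0 else mark (p k))" for k
    have mk_marks: "M (mk k) (p k)" for k
      using h0 M(3)[OF g(1) h0(2)] mark p_ends \<open>0 < N\<close> unfolding mk_def by auto
    have mk_carrier: "mk k \<in> carrier G" for k using M(1)[OF mk_marks] .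
    have mk_steps: "inv (mk k) \<otimes> mk (Suc k) \<in> T" if "k < N" for k
      using M(4)[OF mk_marks mk_marks step[OF that]] .
    have "\<exists>w\<in>words G T N. mk N = mk 0 \<otimes> w"
      using chain_in_words[of T mk N N, OF T(2) mk_carrier mk_steps] by simp
    then obtain w where w: "w \<in> words G T N" "g \<otimes> h0 = h0 \<otimes> w"
      using \<open>0 < N\<close> unfolding mk_def by auto
    have "w \<in> carrier G" using w(1) words_carrier[OF T(2)] by blast
    then have "g = h0 \<otimes> w \<otimes> inv h0" using w(2) g(1) h0(1) by (simp add: inv_solve_right)
    then show ?thesis using w(1) by blast
  qed
  then have "{g \<in> carrier G. dist (\<phi> g y) y \<le> R} \<subseteq> (\<lambda>w. h0 \<otimes> w \<otimes> inv h0) ` words G T N"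
    by (auto simp: dist_commute)
  then show ?thesis using words_finite[OF T(1)] finite_subset by blast
qed

definition displacement :: "'g list \<Rightarrow> 'a \<Rightarrow> real" where
  "displacement l x = (\<Sum>i<length l. dist (\<phi> (l ! i) x) x)"

lemma displacement_nonneg: "0 \<le> displacement l x"
  unfolding displacement_def by (simp add: sum_nonneg)

lemma displacement_conj:
  assumes l: "set l \<subseteq> carrier G" and h: "h \<in> carrier G"
  shows "displacement l (\<phi> h x) = displacement (conj_list G h l) x"
proof -
  have "dist (\<phi> (l ! i) (\<phi> h x)) (\<phi> h x) = dist (\<phi> (inv h \<otimes> l ! i \<otimes> h) x) x" if "i < length l" for i
  proof -
    have c: "l ! i \<in> carrier G" using l that nth_mem by blast
    then have "\<phi> (inv h \<otimes> l ! i \<otimes> h) x = \<phi> (inv h) (\<phi> (l ! i) (\<phi> h x))"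
      using h by (simp add: phi_mult)
    then show ?thesis using h c by (simp add: dist_phi_swap)
  qed
  then show ?thesis unfolding displacement_def conj_list_def by simp
qed

lemma displacement_centraliser:
  "set l \<subseteq> carrier G \<Longrightarrow> z \<in> list_centraliser G l \<Longrightarrow> displacement l (\<phi> z x) = displacement l x"
  by (simp add: displacement_conj list_centraliser_def)

lemma displacement_lipschitz:
  assumes l: "set l \<subseteq> carrier G"
  shows "displacement l x \<le> displacement l x' + 2 * length l * dist x x'"
proof -
  have "dist (\<phi> (l ! i) x) x \<le> dist (\<phi> (l ! i) x') x' + 2 * dist x x'" if "i < length l" for i
  proof -
    have "l ! i \<in> carrier G" using l that nth_mem by blast
    then have "dist (\<phi> (l ! i) x) (\<phi> (l ! i) x') = dist x x'" by simp
    then show ?thesis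
      using dist_triangle[of "\<phi> (l ! i) x" x "\<phi> (l ! i) x'"] dist_triangle[of "\<phi> (l ! i) x'" x x']
      by (simp add: dist_commute)
  qed
  then have "displacement l x \<le> (\<Sum>i<length l. dist (\<phi> (l ! i) x') x' + 2 * dist x x')"
    unfolding displacement_def by (intro sum_mono) auto
  also have "\<dots> = displacement l x' + 2 * length l * dist x x'"
    unfolding displacement_def by (simp add: sum.distrib)
  finally show ?thesis .
qed

lemma displacement_continuous: "set l \<subseteq> carrier G \<Longrightarrow> continuous_on S (displacement l)"
  unfolding displacement_def
  by (intro continuous_on_sum continuous_on_dist continuous_on_id phi_continuous) auto

lemma displacement_convex:
  assumes H: "hadamard_space TYPE('a)" and l: "set l \<subseteq> carrier G"
    and \<gamma>: "geodesic_path \<gamma> q p" and t: "0 \<le> t" "t \<le> 1"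
  shows "displacement l (\<gamma> (t * dist q p)) \<le> (1 - t) * displacement l q + t * displacement l p"
proof -
  have "dist (\<phi> (l ! i) (\<gamma> (t * dist q p))) (\<gamma> (t * dist q p))
     \<le> (1 - t) * dist (\<phi> (l ! i) q) q + t * dist (\<phi> (l ! i) p) p" if "i < length l" for i
  proof -
    have c: "l ! i \<in> carrier G" using l that nth_mem by blast
    have "geodesic_path (\<phi> (l ! i) \<circ> \<gamma>) (\<phi> (l ! i) q) (\<phi> (l ! i) p)"
      using c by (intro geodesic_path_isometry[OF \<gamma>]) simp
    from hadamard_geodesics_convex[OF H this \<gamma> t] c show ?thesis by simp
  qed
  then have "displacement l (\<gamma> (t * dist q p))
      \<le> (\<Sum>i<length l. (1 - t) * dist (\<phi> (l ! i) q) q + t * dist (\<phi> (l ! i) p) p)"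
    unfolding displacement_def by (intro sum_mono) auto
  also have "\<dots> = (1 - t) * displacement l q + t * displacement l p"
    unfolding displacement_def by (simp add: sum.distrib sum_distrib_left)
  finally show ?thesis .
qed

lemma conjugator_displacement:
  assumes "h \<in> carrier G" "k \<in> carrier G" "z1 \<in> carrier G" "z2 \<in> carrier G"
  shows "dist (\<phi> (inv h \<otimes> (z1 \<otimes> (inv z2 \<otimes> k))) y) y \<le> dist (\<phi> h y) (\<phi> z1 y) + dist (\<phi> k y) (\<phi> z2 y)"
proof -
  let ?u = "\<phi> z1 (\<phi> (inv z2) (\<phi> k y))"
  have "dist (\<phi> (inv h \<otimes> (z1 \<otimes> (inv z2 \<otimes> k))) y) y = dist ?u (\<phi> h y)"
    using assms by (simp add: phi_mult dist_phi_swap)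
  also have "\<dots> \<le> dist ?u (\<phi> z1 y) + dist (\<phi> z1 y) (\<phi> h y)" by (rule dist_triangle)
  also have "dist ?u (\<phi> z1 y) = dist (\<phi> k y) (\<phi> z2 y)"
    using assms by (simp add: dist_phi_swap)
  finally show ?thesis by (simp add: dist_commute)
qed

text \<open>If every orbit point hy lies within A F(hy) + B of the orbit of y under the
  centraliser Z of a0, then conjugate lists of conjugates of a0 admit a
  conjugator g with d_y(g, e) bounded by A times the total length plus 2B: take
  g = h\<inverse> z1 z2\<inverse> k for conjugators h, k from a0.\<close>
lemma short_conjugator_from_retraction:
  assumes a0: "set a0 \<subseteq> carrier G"
    and retraction: "\<And>h. h \<in> carrier G \<Longrightarrow>
        \<exists>z\<in>list_centraliser G a0. dist (\<phi> h y) (\<phi> z y) \<le> A * displacement a0 (\<phi> h y) + B"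
    and ab: "conj_lists G a0 a" "conj_lists G a b"
  shows "\<exists>g\<in>carrier G. conj_by G g a b \<and>
           orbit_dist \<phi> y g \<one> \<le> A * (\<Sum>i<length a. orbit_dist \<phi> y (a ! i) \<one> + orbit_dist \<phi> y (b ! i) \<one>) + 2 * B"
proof -
  obtain h where h: "h \<in> carrier G" "a = conj_list G h a0"
    using ab(1) unfolding conj_lists_def conj_by_iff_conj_list by blast
  obtain k' where k': "k' \<in> carrier G" "b = conj_list G k' a"
    using ab(2) unfolding conj_lists_def conj_by_iff_conj_list by blast
  define k where "k = h \<otimes> k'"
  have k: "k \<in> carrier G" "b = conj_list G k a0"
    using h k' a0 unfolding k_def by (auto simp: conj_list_mult)
  obtain z1 z2 where z1: "z1 \<in> list_centraliser G a0" "dist (\<phi> h y) (\<phi> z1 y) \<le> A * displacement a0 (\<phi> h y) + B"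
    and z2: "z2 \<in> list_centraliser G a0" "dist (\<phi> k y) (\<phi> z2 y) \<le> A * displacement a0 (\<phi> k y) + B"
    using retraction h(1) k(1) by blast
  have zc: "z1 \<in> carrier G" "z2 \<in> carrier G" using z1 z2 unfolding list_centraliser_def by auto
  define g where "g = inv h \<otimes> (z1 \<otimes> (inv z2 \<otimes> k))"
  have gc: "g \<in> carrier G" using h k zc unfolding g_def by simp
  have "conj_list G g a = conj_list G (z1 \<otimes> (inv z2 \<otimes> k)) a0"
    using h a0 gc zc k unfolding g_def by (simp add: conj_list_mult m_assoc[symmetric])
  also have "\<dots> = b"
    using a0 z1 list_centraliser_inv[OF a0 z2(1)] zc k by (simp add: conj_list_centraliser_factor)
  finally have "conj_by G g a b" unfolding conj_by_iff_conj_list by simp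
  moreover have "(\<Sum>i<length a. orbit_dist \<phi> y (a ! i) \<one> + orbit_dist \<phi> y (b ! i) \<one>)
      = displacement a0 (\<phi> h y) + displacement a0 (\<phi> k y)"
  proof -
    have "(\<Sum>i<length a. orbit_dist \<phi> y (a ! i) \<one> + orbit_dist \<phi> y (b ! i) \<one>)
        = displacement a y + displacement b y"
      using h(2) k(2) unfolding orbit_dist_def displacement_def conj_list_def by (simp add: sum.distrib)
    then show ?thesis using h k a0 by (simp add: displacement_conj)
  qed
  moreover have "orbit_dist \<phi> y g \<one> \<le> dist (\<phi> h y) (\<phi> z1 y) + dist (\<phi> k y) (\<phi> z2 y)"
    using conjugator_displacement[OF h(1) k(1) zc] unfolding orbit_dist_def g_def by simp
  ultimately show ?thesis using gc z1(2) z2(2) by (intro bexI[of _ g]) (auto simp: algebra_simps)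
qed

end

section \<open>The coarse retraction onto the centraliser orbit\<close>

locale cocompact_hadamard_action = group_isometric_action G \<phi>
  for G :: "('g, 'b) monoid_scheme" (structure) and \<phi> :: "'g \<Rightarrow> 'a::metric_space \<Rightarrow> 'a" +
  fixes a0 :: "'g list"
  assumes hadamard: "hadamard_space TYPE('a)"
    and locally_compact: "locally_compact_space (euclidean :: 'a topology)"
    and proper: "proper_action G \<phi>"
    and cocompact: "cocompact_action G \<phi>"
    and a0_carrier: "set a0 \<subseteq> carrier G"
begin

abbreviation F :: "'a \<Rightarrow> real" where "F \<equiv> displacement a0"

abbreviation Z :: "'g set" where "Z \<equiv> list_centraliser G a0"

text \<open>On an orbit, each sublevel set of F meets only finitely many Z-cosets: the
  conjugates of a0 by such elements lie in a finite orbit ball.\<close>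
lemma sublevel_finitely_many_cosets:
  "\<exists>S. finite S \<and> S \<subseteq> carrier G \<and> (\<forall>g\<in>carrier G. F (\<phi> g y) \<le> R \<longrightarrow> (\<exists>z\<in>Z. \<exists>s\<in>S. g = z \<otimes> s))"
proof -
  define Orbit_ball where "Orbit_ball = {c \<in> carrier G. dist (\<phi> c y) y \<le> R}"
  have "finite Orbit_ball" unfolding Orbit_ball_def by (rule orbit_ball_finite[OF hadamard_geodesic[OF hadamard] proper cocompact])
  define Sub where "Sub = {g \<in> carrier G. F (\<phi> g y) \<le> R}"
  define cl where "cl g = conj_list G g a0" for g
  have "cl g \<in> {l. set l \<subseteq> Orbit_ball \<and> length l = length a0}" if g: "g \<in> Sub" for g
  proof -
    have "dist (\<phi> c y) y \<le> displacement (cl g) y" if c: "c \<in> set (cl g)" for c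
    proof -
      obtain i where "i < length (cl g)" "c = cl g ! i" using c unfolding in_set_conv_nth by blast
      then show ?thesis unfolding displacement_def by (auto intro!: member_le_sum)
    qed
    moreover have "displacement (cl g) y \<le> R"
      using g displacement_conj[OF a0_carrier, of g y] unfolding Sub_def cl_def by simp
    moreover have "set (cl g) \<subseteq> carrier G"
      using g a0_carrier unfolding Sub_def cl_def by (intro conj_list_carrier) auto
    ultimately have "set (cl g) \<subseteq> Orbit_ball" unfolding Orbit_ball_def by (blast intro: order_trans)
    moreover have "length (cl g) = length a0" unfolding cl_def conj_list_def by simp
    ultimately show ?thesis by simp
  qed
  then have "finite (cl ` Sub)"
    by (intro finite_subset[OF _ finite_lists_length_eq[OF \<open>finite Orbit_ball\<close>]]) blast
  define rep where "rep l = (SOME g. g \<in> Sub \<and> cl g = l)" for l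
  have rep: "rep (cl g) \<in> Sub" "cl (rep (cl g)) = cl g" if "g \<in> Sub" for g
    using someI[of "\<lambda>h. h \<in> Sub \<and> cl h = cl g" g] that unfolding rep_def by auto
  have "\<exists>z\<in>Z. \<exists>s\<in>rep ` cl ` Sub. g = z \<otimes> s" if g: "g \<in> carrier G" "F (\<phi> g y) \<le> R" for g
  proof -
    have "g \<in> Sub" using g unfolding Sub_def by simp
    define s where "s = rep (cl g)"
    have s: "s \<in> carrier G" "conj_list G s a0 = conj_list G g a0"
      using rep[OF \<open>g \<in> Sub\<close>] unfolding s_def Sub_def cl_def by auto
    have "g \<otimes> inv s \<in> Z" using g(1) s(1) s(2)[symmetric] a0_carrier by (intro conj_list_eq_centraliser)
    moreover have "g = g \<otimes> inv s \<otimes> s" using g(1) s(1) by (simp add: m_assoc)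
    moreover have "s \<in> rep ` cl ` Sub" unfolding s_def using \<open>g \<in> Sub\<close> by (intro imageI)
    ultimately show ?thesis by blast
  qed
  moreover have "rep ` cl ` Sub \<subseteq> carrier G" using rep(1) unfolding Sub_def by auto
  moreover have "finite (rep ` cl ` Sub)" using \<open>finite (cl ` Sub)\<close> by simp
  ultimately show ?thesis by (intro exI[of _ "rep ` cl ` Sub"]) blast
qed

lemma sublevel_compact_transversal:
  "\<exists>K. compact K \<and> (\<forall>u. F u \<le> R \<longrightarrow> (\<exists>z\<in>Z. \<phi> z u \<in> K))"
proof -
  fix y :: 'a
  obtain K where K: "compact K" "\<And>p. \<exists>g\<in>carrier G. \<exists>k\<in>K. p = \<phi> g k"
    using compact_fundamental_set[OF locally_compact cocompact] by blast
  obtain D where D: "\<And>k. k \<in> K \<Longrightarrow> dist y k \<le> D"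
    using compact_imp_bounded[OF K(1)] bounded_any_center by metis
  obtain S where S: "finite S" "S \<subseteq> carrier G"
    "\<And>g. g \<in> carrier G \<Longrightarrow> F (\<phi> g y) \<le> R + 2 * length a0 * D \<Longrightarrow> \<exists>z\<in>Z. \<exists>s\<in>S. g = z \<otimes> s"
    using sublevel_finitely_many_cosets[of y "R + 2 * length a0 * D"] by blast
  have "compact (\<Union>s\<in>S. \<phi> s ` K)"
    using S(1,2) K(1) by (intro compact_UN) (auto intro!: compact_continuous_image phi_continuous)
  moreover have "\<exists>z\<in>Z. \<phi> z u \<in> (\<Union>s\<in>S. \<phi> s ` K)" if "F u \<le> R" for u
  proof -
    obtain g k where gk: "g \<in> carrier G" "k \<in> K" "u = \<phi> g k" using K(2) by blast
    have "F (\<phi> g y) \<le> F u + 2 * length a0 * dist (\<phi> g y) u"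
      by (rule displacement_lipschitz[OF a0_carrier])
    also have "\<dots> \<le> R + 2 * length a0 * D"
      using that D[OF gk(2)] gk by (simp add: mult_left_mono add_mono)
    finally obtain z s where zs: "z \<in> Z" "s \<in> S" "g = z \<otimes> s" using S(3) gk(1) by blast
    have zc: "z \<in> carrier G" and sc: "s \<in> carrier G"
      using zs S(2) unfolding list_centraliser_def by auto
    have "\<phi> (inv z) u = \<phi> s k" using gk zs zc sc by (simp add: phi_mult)
    then show ?thesis using zs gk list_centraliser_inv[OF a0_carrier zs(1)] by force
  qed
  ultimately show ?thesis by blast
qed

text \<open>By Z-invariance it suffices
  to look at the compact transversal, where F attains its minimum.\<close>
lemma displacement_gap:
  assumes r: "0 < r"
  shows "\<exists>\<delta>>0. \<forall>u. (\<forall>c. F c \<le> R \<longrightarrow> r \<le> dist u c) \<longrightarrow> R + \<delta> \<le> F u"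
proof -
  define far where "far u \<longleftrightarrow> (\<forall>c. F c \<le> R \<longrightarrow> r \<le> dist u c)" for u
  obtain K where K: "compact K" "\<And>u. F u \<le> R + 1 \<Longrightarrow> \<exists>z\<in>Z. \<phi> z u \<in> K"
    using sublevel_compact_transversal[of "R + 1"] by blast
  define S where "S = K \<inter> (\<Inter>c\<in>{c. F c \<le> R}. {u. r \<le> dist u c})"
  have "compact S" unfolding S_def
    by (intro compact_Int_closed K(1) closed_INT ballI closed_Collect_le continuous_on_const
        continuous_on_dist continuous_on_id)
  have far_S: "u \<in> S \<longleftrightarrow> u \<in> K \<and> far u" for u unfolding S_def far_def by auto
  have translate: "\<exists>v\<in>S. F v = F u" if far_u: "far u" and level: "F u \<le> R + 1" for u
  proof -
    obtain z where z: "z \<in> Z" "\<phi> z u \<in> K" using K(2) level by blast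
    have zc: "z \<in> carrier G" using z unfolding list_centraliser_def by simp
    have "far (\<phi> z u)" unfolding far_def
    proof (intro allI impI)
      fix c assume "F c \<le> R"
      then have "F (\<phi> (inv z) c) \<le> R"
        using displacement_centraliser[OF a0_carrier list_centraliser_inv[OF a0_carrier z(1)]] by simp
      then show "r \<le> dist (\<phi> z u) c" using far_u zc unfolding far_def by (simp add: dist_phi_swap)
    qed
    then show ?thesis using z far_S displacement_centraliser[OF a0_carrier z(1)] by blast
  qed
  show ?thesis
  proof (cases "S = {}")
    case True
    then have "R + 1 \<le> F u" if "far u" for u using translate[OF that] by force
    then show ?thesis unfolding far_def by (intro exI[of _ 1]) auto
  next
    case False
    obtain v where v: "v \<in> S" "\<And>w. w \<in> S \<Longrightarrow> F v \<le> F w"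
      using continuous_attains_inf[OF \<open>compact S\<close> False displacement_continuous[OF a0_carrier]] by blast
    have "R < F v"
    proof (rule ccontr)
      assume "\<not> R < F v"
      have "far v" using v(1) far_S by blast
      then have "r \<le> dist v v" using \<open>\<not> R < F v\<close> unfolding far_def by (meson not_less)
      then show False using r by simp
    qed
    have "R + min 1 (F v - R) \<le> F u" if "far u" for u
      using translate[OF that] v(2) by (cases "F u \<le> R + 1") force+
    then show ?thesis using \<open>R < F v\<close> unfolding far_def by (intro exI[of _ "min 1 (F v - R)"]) auto
  qed
qed

text \<open>Go linearly (in F(hy)) to a point q of the
  sublevel set {F \<le> F y}, and move q by an element of Z into a compact set.\<close>
lemma near_centraliser_orbit:
  "\<exists>A B. 0 \<le> A \<and> 0 \<le> B \<and>
     (\<forall>h\<in>carrier G. \<exists>z\<in>Z. dist (\<phi> h y) (\<phi> z y) \<le> A * F (\<phi> h y) + B)"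
proof -
  obtain \<delta> where \<delta>: "0 < \<delta>" "\<And>u. (\<And>c. F c \<le> F y \<Longrightarrow> 1/2 \<le> dist u c) \<Longrightarrow> F y + \<delta> \<le> F u"
    using displacement_gap[of "1/2" "F y"] by auto
  have growth: "\<exists>q. F q \<le> F y \<and> dist p q \<le> 1 + F p / \<delta>" for p
    using hadamard_geodesic[OF hadamard] displacement_convex[OF hadamard a0_carrier]
      displacement_nonneg \<delta> by (intro convex_gap_linear_growth[of F y]) auto
  obtain K where K: "compact K" "\<And>u. F u \<le> F y \<Longrightarrow> \<exists>z\<in>Z. \<phi> z u \<in> K"
    using sublevel_compact_transversal[of "F y"] by blast
  obtain D0 where "\<And>k. k \<in> K \<Longrightarrow> dist y k \<le> D0"
    using compact_imp_bounded[OF K(1)] bounded_any_center by metis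
  then obtain D where D: "0 \<le> D" "\<And>k. k \<in> K \<Longrightarrow> dist k y \<le> D"
    by (metis dist_commute max.cobounded2 max.coboundedI1)
  have "\<exists>z\<in>Z. dist (\<phi> h y) (\<phi> z y) \<le> 1 / \<delta> * F (\<phi> h y) + (1 + D)" if "h \<in> carrier G" for h
  proof -
    obtain q where q: "F q \<le> F y" "dist (\<phi> h y) q \<le> 1 + F (\<phi> h y) / \<delta>" using growth by blast
    obtain z where z: "z \<in> Z" "\<phi> z q \<in> K" using K(2)[OF q(1)] by blast
    have zc: "z \<in> carrier G" using z unfolding list_centraliser_def by simp
    have "dist (\<phi> h y) (\<phi> (inv z) y) \<le> dist (\<phi> h y) q + dist q (\<phi> (inv z) y)" by (rule dist_triangle)
    also have "dist q (\<phi> (inv z) y) = dist (\<phi> z q) y" using zc by (simp add: dist_phi_swap)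
    finally show ?thesis
      using q(2) D(2)[OF z(2)] list_centraliser_inv[OF a0_carrier z(1)] by (intro bexI[of _ "inv z"]) auto
  qed
  then show ?thesis using \<delta>(1) D(1) by (intro exI[of _ "1 / \<delta>"] exI[of _ "1 + D"]) auto
qed

end

theorem lemma4:
  fixes G :: "('g, 'b) monoid_scheme" and \<phi> :: "'g \<Rightarrow> 'a::metric_space \<Rightarrow> 'a"
    and y :: 'a and a0 :: "'g list"
  assumes "hadamard_space TYPE('a)"
    and "locally_compact_space (euclidean :: 'a topology)"
    and "group G"
    and "isometric_action G \<phi>"
    and "proper_action G \<phi>"
    and "cocompact_action G \<phi>"
    and "set a0 \<subseteq> carrier G"
  shows "\<exists>Cstar C. Cstar \<ge> 0 \<and> C \<ge> 0 \<and>
    (\<forall>a b. conj_lists G a0 a \<and> conj_lists G a b \<longrightarrow>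
       (\<exists>g\<in>carrier G. conj_by G g a b \<and>
          orbit_dist \<phi> y g \<one>\<^bsub>G\<^esub>
            \<le> Cstar * (\<Sum>i<length a. orbit_dist \<phi> y (a ! i) \<one>\<^bsub>G\<^esub> + orbit_dist \<phi> y (b ! i) \<one>\<^bsub>G\<^esub>) + C))"
proof -
  interpret cocompact_hadamard_action G \<phi> a0
    by (intro cocompact_hadamard_action.intro group_isometric_action.intro
        group_isometric_action_axioms.intro cocompact_hadamard_action_axioms.intro assms)
  obtain A B where AB: "0 \<le> A" "0 \<le> B"
    and retraction: "\<And>h. h \<in> carrier G \<Longrightarrow> \<exists>z\<in>Z. dist (\<phi> h y) (\<phi> z y) \<le> A * F (\<phi> h y) + B"
    using near_centraliser_orbit[of y] by blast
  show ?thesis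
    using AB short_conjugator_from_retraction[OF a0_carrier retraction]
    by (intro exI[of _ A] exI[of _ "2 * B"]) auto
qed

end
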